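(* Let $1<p,q<\infty$ and $\alpha,\beta>0$ with $\frac{\alpha}{p}+\frac{\beta}{q}=1$, and let $a<b$. Let $\lambda_1(p,q)$ be the first Dirichlet eigenvalue on $(a,b)$ of the system $$-(|u'|^{p-2}u')'=\lambda\alpha|u|^{\alpha-2}u|v|^\beta,\qquad -(|v'|^{q-2}v')'=\lambda\beta|u|^\alpha|v|^{\beta-2}v,$$ with $u(a)=u(b)=v(a)=v(b)=0$, and for $s>1$ let $\Lambda_1(s)$ be the first Dirichlet eigenvalue of $-(|\varphi'|^{s-2}\varphi')'=\Lambda|\varphi|^{s-2}\varphi$ on $(a,b)$. Then $$\left(\alpha^{\frac{\alpha}{p}}\beta^{\frac{\beta}{q}}\right)^{-1}\left(\frac{2}{\pi_{\alpha+\beta}}\right)^{\alpha+\beta}\frac{\Lambda_1(\alpha+\beta)}{\alpha+\beta-1}\le\lambda_1(p,q).$$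
   Context: $\lambda_1(p,q)$ is the infimum over $(u,v)\in W^{1,p}_0(a,b)\times W^{1,q}_0(a,b)$ with $\int_a^b|u|^\alpha|v|^\beta>0$ of $\big(\frac1p\int_a^b|u'|^p+\frac1q\int_a^b|v'|^q\big)/\int_a^b|u|^\alpha|v|^\beta$; $\Lambda_1(s)=\inf\{\int_a^b|u'|^s/\int_a^b|u|^s: 0\ne u\in W^{1,s}_0(a,b)\}$. For $s>1$, $\pi_s=2\int_0^1\frac{dt}{(1-t^s)^{1/s}}$. *)

theory Defs
  imports "HOL-Analysis.Analysis"
begin

text \<open>One-dimensional Sobolev space W^{1,p}_0(a,b): u is (the continuous representative of)
  an absolutely continuous function on [a,b] with u(a) = u(b) = 0 whose derivative g
  lies in L^p(a,b).\<close>
definition W10 :: "real \<Rightarrow> real \<Rightarrow> real \<Rightarrow> (real \<Rightarrow> real) \<Rightarrow> (real \<Rightarrow> real) \<Rightarrow> bool" where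
  "W10 p a b u g \<longleftrightarrow>
     set_integrable lborel {a..b} g \<and>
     set_integrable lborel {a..b} (\<lambda>t. \<bar>g t\<bar> powr p) \<and>
     (\<forall>x\<in>{a..b}. u x = (LINT t:{a..x}|lborel. g t)) \<and>
     u b = 0"

definition lambda1 :: "real \<Rightarrow> real \<Rightarrow> real \<Rightarrow> real \<Rightarrow> real \<Rightarrow> real \<Rightarrow> real" where
  "lambda1 p q \<alpha> \<beta> a b = Inf
     {((1/p) * (LINT t:{a..b}|lborel. \<bar>g t\<bar> powr p) + (1/q) * (LINT t:{a..b}|lborel. \<bar>h t\<bar> powr q))
        / (LINT t:{a..b}|lborel. \<bar>u t\<bar> powr \<alpha> * \<bar>v t\<bar> powr \<beta>)
      | u g v h. W10 p a b u g \<and> W10 q a b v h \<and>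
                 (LINT t:{a..b}|lborel. \<bar>u t\<bar> powr \<alpha> * \<bar>v t\<bar> powr \<beta>) > 0}"

definition Lambda1 :: "real \<Rightarrow> real \<Rightarrow> real \<Rightarrow> real" where
  "Lambda1 s a b = Inf
     {(LINT t:{a..b}|lborel. \<bar>g t\<bar> powr s) / (LINT t:{a..b}|lborel. \<bar>u t\<bar> powr s)
      | u g. W10 s a b u g \<and> (\<exists>x\<in>{a..b}. u x \<noteq> 0)}"

definition pi_s :: "real \<Rightarrow> real" where
  "pi_s s = 2 * (LBINT t=0..1. 1 / (1 - t powr s) powr (1/s))"

end

theory Submission
  imports Defs
begin

text \<open>
  Lower bound: for admissible (u, v) the boundary conditions give 2 |u x| \<le> \<integral>|u'|, so by
  Hoelder |u| \<le> A^(1/p) L^(1-1/p) / 2, where A = \<integral>|u'|^p and L = b - a; likewise for v.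
  Hence the denominator is at most (L/2)^(\<alpha>+\<beta>) A^(\<alpha>/p) B^(\<beta>/q), and Young's inequality
  with the weights \<alpha>/p and \<beta>/q, which sum to 1, bounds A^(\<alpha>/p) B^(\<beta>/q) by
  \<alpha>^(\<alpha>/p) \<beta>^(\<beta>/q) (A/p + B/q). So lambda1 is at least (\<alpha>^(\<alpha>/p) \<beta>^(\<beta>/q))^(-1) (2/L)^(\<alpha>+\<beta>).

  Upper bound: for s = \<alpha> + \<beta>, the generalized sine (the inverse of
  y \<mapsto> \<integral>_0^y (1 - t^s)^(-1/s) dt on [0, pi_s/2]) yields the test function
  sin_s (pi_s (t - a) / L), reflected at the midpoint of [a, b], whose Rayleigh quotient
  is (s - 1) (pi_s / L)^s. Hence Lambda1(s) (2/pi_s)^s / (s - 1) \<le> (2/L)^s.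
\<close>

lemma has_integral_one_minus_powr:
  assumes "r > -1"
  shows "((\<lambda>t. (1 - t) powr r) has_integral 1 / (r + 1)) {0..1::real}"
proof -
  have "((\<lambda>t. t powr r) has_integral 1 / (r + 1)) {0..1}"
    using has_integral_powr_from_0[OF assms, of 1] by simp
  from has_integral_reflect_lemma_real[OF this]
  have "((\<lambda>t. (-t) powr r) has_integral 1 / (r + 1)) {-1..0}"
    by simp
  from has_integral_shift_real_ivl[OF this, of "-1"] show ?thesis
    by simp
qed

lemma absolutely_integrable_imp_set_integrable_lborel:
  fixes f :: "real \<Rightarrow> real"
  assumes "f absolutely_integrable_on S" "S \<in> sets borel" "f \<in> borel_measurable borel"
  shows "set_integrable lborel S f"
proof -
  have "(\<lambda>x. indicator S x *\<^sub>R f x) \<in> borel_measurable lborel"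
    using assms(2,3) by measurable
  then show ?thesis
    using assms(1) integrable_completion unfolding set_integrable_def by blast
qed

lemma set_integral_nonneg:
  fixes f :: "real \<Rightarrow> real"
  assumes "\<And>x. x \<in> A \<Longrightarrow> 0 \<le> f x"
  shows "0 \<le> (LINT x:A|lborel. f x)"
  unfolding set_lebesgue_integral_def
  by (rule Bochner_Integration.integral_nonneg) (use assms in \<open>auto simp: indicator_def\<close>)

lemma has_integral_comp_tent:
  fixes f :: "real \<Rightarrow> real"
  assumes f: "(f has_integral I) {0..k * (b - a) / 2}" and k: "0 < k" and ab: "a \<le> b"
  shows "((\<lambda>t. f (k * min (t - a) (b - t))) has_integral 2 * I / k) {a..b}"
proof -
  define m where "m = (a + b) / 2"
  have min_left: "min (t - a) (b - t) = t - a" if "t \<le> m" for t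
    using that by (simp add: m_def)
  have min_right: "min (t - a) (b - t) = b - t" if "m \<le> t" for t
    using that by (simp add: m_def)
  have a: "(0 - - (k * a)) /\<^sub>R k = a" and m: "(k * (b - a) / 2 - - (k * a)) /\<^sub>R k = m"
    using k by (simp_all add: m_def field_simps)
  from has_integral_affinity'[OF f[unfolded cbox_interval[symmetric]] k, of "- (k * a)"]
  have "((\<lambda>t. f (k * t + - (k * a))) has_integral I / k) {a..m}"
    unfolding a m by (simp add: divide_inverse_commute)
  then have left: "((\<lambda>t. f (k * min (t - a) (b - t))) has_integral I / k) {a..m}"
    by (rule has_integral_eq[rotated]) (simp add: min_left algebra_simps)
  have reflected: "((\<lambda>t. f (- t)) has_integral I) (cbox (- (k * (b - a) / 2)) (- 0))"
    using has_integral_reflect_real[THEN iffD2, OF f] by simp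
  have m': "(- (k * (b - a) / 2) - - (k * b)) /\<^sub>R k = m" and b: "(- 0 - - (k * b)) /\<^sub>R k = b"
    using k by (simp_all add: m_def field_simps)
  from has_integral_affinity'[OF reflected k, of "- (k * b)"]
  have "((\<lambda>t. f (- (k * t + - (k * b)))) has_integral I / k) {m..b}"
    unfolding m' b by (simp add: divide_inverse_commute)
  then have right: "((\<lambda>t. f (k * min (t - a) (b - t))) has_integral I / k) {m..b}"
    by (rule has_integral_eq[rotated]) (simp add: min_right algebra_simps)
  show ?thesis
    using has_integral_combine[OF _ _ left right] ab by (simp add: m_def)
qed

lemma has_real_derivative_min_diff:
  fixes a b t :: real
  assumes "2 * t \<noteq> a + b"
  shows "((\<lambda>t. min (t - a) (b - t)) has_real_derivative (if 2 * t \<le> a + b then 1 else -1)) (at t)"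
proof (cases "2 * t < a + b")
  case True
  have "((\<lambda>t. t - a) has_real_derivative 1) (at t)"
    by (auto intro!: derivative_eq_intros)
  then have "((\<lambda>t. min (t - a) (b - t)) has_real_derivative 1) (at t)"
    by (rule has_field_derivative_transform_within_open[where S = "{..<(a + b) / 2}"]) (use True in auto)
  then show ?thesis
    using True by simp
next
  case False
  have "((\<lambda>t. b - t) has_real_derivative -1) (at t)"
    by (auto intro!: derivative_eq_intros)
  then have "((\<lambda>t. min (t - a) (b - t)) has_real_derivative -1) (at t)"
    by (rule has_field_derivative_transform_within_open[where S = "{(a + b) / 2<..}"]) (use False assms in auto)
  then show ?thesis
    using False assms by simp
qed

lemma divide_le_Young_bound:
  fixes p A L x :: real
  assumes p: "1 < p" and A: "0 < A" and L: "0 < L" and x: "0 \<le> x"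
  shows "x / (A powr (1/p) * L powr (1 - 1/p)) \<le> (1/p) * (x powr p / A) + (1 - 1/p) * (1 / L)"
proof (cases "x = 0")
  case False
  then have "0 < x"
    using x by simp
  then have "(x powr p / A) powr (1/p) * (1/L) powr (1 - 1/p) \<le> (1/p) * (x powr p / A) + (1 - 1/p) * (1 / L)"
    using p A L by (intro Youngs_inequality_0) auto
  moreover have "(x powr p / A) powr (1/p) * (1/L) powr (1 - 1/p) = x / (A powr (1/p) * L powr (1 - 1/p))"
    using p A L \<open>0 < x\<close> by (simp add: powr_divide powr_powr)
  ultimately show ?thesis
    by simp
qed (use p A L in simp)

text \<open>Hoelder's inequality for |g| and 1, obtained by integrating the normalized Young inequality.\<close>
lemma integral_abs_le_powr_bound:
  fixes g :: "real \<Rightarrow> real"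
  assumes p: "1 < p" and ab: "a < b"
    and g: "(\<lambda>t. \<bar>g t\<bar>) integrable_on {a..b}" and gp: "(\<lambda>t. \<bar>g t\<bar> powr p) integrable_on {a..b}"
    and A: "integral {a..b} (\<lambda>t. \<bar>g t\<bar> powr p) \<le> A" "0 < A"
  shows "integral {a..b} (\<lambda>t. \<bar>g t\<bar>) \<le> A powr (1/p) * (b - a) powr (1 - 1/p)"
proof -
  define C where "C = A powr (1/p) * (b - a) powr (1 - 1/p)"
  define L where "L = b - a"
  have C: "0 < C"
    using A ab by (simp add: C_def)
  have L: "0 < L"
    using ab by (simp add: L_def)
  have lhs: "((\<lambda>t. \<bar>g t\<bar> / C) has_integral integral {a..b} (\<lambda>t. \<bar>g t\<bar>) / C) {a..b}"
    using has_integral_divide[OF integrable_integral[OF g], of C] by simp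
  have "((\<lambda>t. (1/p) * (\<bar>g t\<bar> powr p / A)) has_integral (1/p) * (integral {a..b} (\<lambda>t. \<bar>g t\<bar> powr p) / A)) {a..b}"
    using has_integral_mult_right[OF has_integral_divide[OF integrable_integral[OF gp], of A], of "1/p"] by simp
  moreover have "((\<lambda>t. (1 - 1/p) * (1 / L)) has_integral (1 - 1/p) * (1 / L) * L) {a..b}"
    using has_integral_const_real[of "(1 - 1/p) * (1 / L)" a b] ab by (simp add: L_def mult.commute)
  ultimately have rhs: "((\<lambda>t. (1/p) * (\<bar>g t\<bar> powr p / A) + (1 - 1/p) * (1 / L)) has_integral
      (1/p) * (integral {a..b} (\<lambda>t. \<bar>g t\<bar> powr p) / A) + (1 - 1/p) * (1 / L) * L) {a..b}"
    by (rule has_integral_add)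
  have "integral {a..b} (\<lambda>t. \<bar>g t\<bar>) / C
      \<le> (1/p) * (integral {a..b} (\<lambda>t. \<bar>g t\<bar> powr p) / A) + (1 - 1/p) * (1 / L) * L"
    by (rule has_integral_le[OF lhs rhs]) (use divide_le_Young_bound[OF p A(2) L] in \<open>simp add: C_def L_def\<close>)
  also have "\<dots> \<le> 1/p + (1 - 1/p)"
  proof -
    have "(1/p) * (integral {a..b} (\<lambda>t. \<bar>g t\<bar> powr p) / A) \<le> 1/p"
      using A p by (intro mult_left_le) auto
    then show ?thesis
      using L by simp
  qed
  finally show ?thesis
    using C by (simp add: C_def divide_le_eq)
qed

lemma Holder_integral_abs:
  fixes g :: "real \<Rightarrow> real"
  assumes p: "1 < p" and ab: "a < b"
    and g: "(\<lambda>t. \<bar>g t\<bar>) integrable_on {a..b}" and gp: "(\<lambda>t. \<bar>g t\<bar> powr p) integrable_on {a..b}"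
  shows "integral {a..b} (\<lambda>t. \<bar>g t\<bar>)
           \<le> integral {a..b} (\<lambda>t. \<bar>g t\<bar> powr p) powr (1/p) * (b - a) powr (1 - 1/p)"
proof (cases "integral {a..b} (\<lambda>t. \<bar>g t\<bar> powr p) = 0")
  case True
  define I where "I = integral {a..b} (\<lambda>t. \<bar>g t\<bar>)"
  define K where "K = (b - a) powr (1 - 1/p)"
  have K: "0 < K"
    using ab by (simp add: K_def)
  have "I \<le> 0"
  proof (rule ccontr)
    assume "\<not> I \<le> 0"
    then have I: "0 < I"
      by simp
    define e where "e = (I / (2 * K)) powr p"
    have e: "0 < e"
      using I K by (simp add: e_def)
    have "I \<le> e powr (1/p) * K"
      using integral_abs_le_powr_bound[OF p ab g gp, of e] e True unfolding I_def K_def by simp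
    also have "e powr (1/p) = I / (2 * K)"
      using I K p by (simp add: e_def powr_powr)
    finally have "I \<le> I / 2"
      using K by simp
    then show False
      using I by simp
  qed
  moreover have "0 \<le> I"
    unfolding I_def by (rule integral_nonneg[OF g]) simp
  ultimately show ?thesis
    using True p unfolding I_def by simp
next
  case False
  moreover have "0 \<le> integral {a..b} (\<lambda>t. \<bar>g t\<bar> powr p)"
    by (rule integral_nonneg[OF gp]) simp
  ultimately show ?thesis
    using integral_abs_le_powr_bound[OF p ab g gp] by simp
qed

lemma Young_weighted:
  fixes \<alpha> \<beta> p q A B :: real
  assumes al: "0 < \<alpha>" and be: "0 < \<beta>" and p: "0 < p" and q: "0 < q" and pq: "\<alpha> / p + \<beta> / q = 1"
    and A: "0 \<le> A" and B: "0 \<le> B"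
  shows "A powr (\<alpha> / p) * B powr (\<beta> / q) \<le> \<alpha> powr (\<alpha> / p) * \<beta> powr (\<beta> / q) * (A / p + B / q)"
proof (cases "A = 0 \<or> B = 0")
  case True
  then show ?thesis
    using al be p q A B by auto
next
  case False
  then have "0 < A" "0 < B"
    using A B by auto
  then have "(A / \<alpha>) powr (\<alpha> / p) * (B / \<beta>) powr (\<beta> / q) \<le> (\<alpha> / p) * (A / \<alpha>) + (\<beta> / q) * (B / \<beta>)"
    using al be p q pq by (intro Youngs_inequality_0) auto
  also have "\<dots> = A / p + B / q"
    using al be by simp
  finally have "A powr (\<alpha> / p) * B powr (\<beta> / q) / (\<alpha> powr (\<alpha> / p) * \<beta> powr (\<beta> / q)) \<le> A / p + B / q"
    using al be A B by (simp add: powr_divide)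
  then show ?thesis
    using al be by (simp add: pos_divide_le_eq mult.commute)
qed

section \<open>The generalized sine\<close>

definition arcsin_s :: "real \<Rightarrow> real \<Rightarrow> real" where
  "arcsin_s s y = integral {0..y} (\<lambda>t. 1 / (1 - t powr s) powr (1/s))"

text \<open>Clamping the argument to [0, pi_s/2] makes sin_s continuous on the whole real line.\<close>
definition sin_s :: "real \<Rightarrow> real \<Rightarrow> real" where
  "sin_s s z = the_inv_into {0..1} (arcsin_s s) (max 0 (min (pi_s s / 2) z))"

definition cos_s :: "real \<Rightarrow> real \<Rightarrow> real" where
  "cos_s s z = (1 - sin_s s z powr s) powr (1/s)"

lemma arcsin_s_0: "arcsin_s s 0 = 0"
  by (simp add: arcsin_s_def)

lemma cos_s_nonneg: "0 \<le> cos_s s z"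
  by (simp add: cos_s_def)

context
  fixes s :: real
  assumes s: "1 < s"
begin

lemma powr_s_le_self: "0 \<le> t \<Longrightarrow> t \<le> 1 \<Longrightarrow> t powr s \<le> t"
  using s by (metis order.order_iff_strict powr_le_one_le powr_nonneg_iff)

lemma arcsin_s_integrand_ge_1:
  assumes "0 \<le> t" "t < 1"
  shows "1 \<le> 1 / (1 - t powr s) powr (1/s)"
proof -
  have "0 < 1 - t powr s" "1 - t powr s \<le> 1"
    using assms powr_s_le_self[of t] by auto
  then show ?thesis
    using s by (simp add: powr_le1)
qed

lemma arcsin_s_integrand_le:
  assumes "0 \<le> t" "t \<le> 1"
  shows "1 / (1 - t powr s) powr (1/s) \<le> (1 - t) powr (-1/s)"
proof (cases "t = 1")
  case False
  then have "0 < 1 - t" "1 - t \<le> 1 - t powr s"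
    using assms powr_s_le_self[of t] by auto
  then have "(1 - t) powr (1/s) \<le> (1 - t powr s) powr (1/s)"
    using s by (intro powr_mono2) auto
  with \<open>0 < 1 - t\<close> show ?thesis
    by (simp add: powr_minus_divide frac_le)
qed simp

lemma arcsin_s_integrable: "(\<lambda>t. 1 / (1 - t powr s) powr (1/s)) integrable_on {0..1}"
proof (rule measurable_bounded_by_integrable_imp_integrable)
  show "(\<lambda>t. 1 / (1 - t powr s) powr (1/s)) \<in> borel_measurable (lebesgue_on {0..1})"
    by (intro measurable_restrict_space1 measurable_completion) measurable
  show "(\<lambda>t. (1 - t) powr (-1/s)) integrable_on {0..1}"
    using has_integral_one_minus_powr[of "-1/s"] s by (auto simp: field_simps)
qed (use arcsin_s_integrand_le in auto)

lemma arcsin_s_integrand_integral: "integral {0..1} (\<lambda>t. 1 / (1 - t powr s) powr (1/s)) = pi_s s / 2"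
proof -
  have "(\<lambda>t. 1 / (1 - t powr s) powr (1/s)) absolutely_integrable_on {0..1}"
    using arcsin_s_integrable by (subst absolutely_integrable_on_iff_nonneg) auto
  then have "set_integrable lborel {0..1} (\<lambda>t. 1 / (1 - t powr s) powr (1/s))"
    by (rule absolutely_integrable_imp_set_integrable_lborel) auto
  from interval_integral_eq_integral[OF _ this]
  have "(LBINT t=0..1. 1 / (1 - t powr s) powr (1/s)) = integral {0..1} (\<lambda>t. 1 / (1 - t powr s) powr (1/s))" by (simp add: zero_ereal_def one_ereal_def)
  then show ?thesis
    by (simp add: pi_s_def)
qed

lemma arcsin_s_1: "arcsin_s s 1 = pi_s s / 2"
  by (simp add: arcsin_s_def arcsin_s_integrand_integral)

lemma continuous_on_arcsin_s: "continuous_on {0..1} (arcsin_s s)"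
  unfolding arcsin_s_def by (rule indefinite_integral_continuous_1[OF arcsin_s_integrable])

lemma has_real_derivative_arcsin_s:
  assumes "0 < y" "y < 1"
  shows "(arcsin_s s has_real_derivative 1 / (1 - y powr s) powr (1/s)) (at y)"
proof -
  have "y powr s < 1"
    using assms powr_s_le_self[of y] by simp
  then have "isCont (\<lambda>t. 1 / (1 - t powr s) powr (1/s)) y"
    using assms by (intro continuous_intros) auto
  then have "(arcsin_s s has_vector_derivative 1 / (1 - y powr s) powr (1/s)) (at y within {0..1} - {})"
    unfolding arcsin_s_def
    by (intro integral_has_vector_derivative_continuous_at[OF arcsin_s_integrable])
       (use assms in \<open>auto intro: continuous_at_imp_continuous_at_within\<close>)
  then have "(arcsin_s s has_vector_derivative 1 / (1 - y powr s) powr (1/s)) (at y)"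
    using assms at_within_interior[of y "{0..1}"] by auto
  then show ?thesis
    by (simp add: has_real_derivative_iff_has_vector_derivative)
qed

lemma arcsin_s_strict_mono: "strict_mono_on {0..1} (arcsin_s s)"
proof (rule strict_mono_onI)
  fix x y :: real assume xy: "x \<in> {0..1}" "y \<in> {0..1}" "x < y"
  show "arcsin_s s x < arcsin_s s y"
  proof (rule DERIV_pos_imp_increasing_open[OF \<open>x < y\<close>])
    fix t assume "x < t" "t < y"
    then show "\<exists>d. (arcsin_s s has_real_derivative d) (at t) \<and> 0 < d"
      using has_real_derivative_arcsin_s[of t] arcsin_s_integrand_ge_1[of t] xy by force
  qed (use xy in \<open>auto intro: continuous_on_subset[OF continuous_on_arcsin_s]\<close>)
qed

lemma pi_s_pos: "0 < pi_s s"
  using strict_mono_onD[OF arcsin_s_strict_mono, of 0 1] by (simp add: arcsin_s_0 arcsin_s_1)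

lemma arcsin_s_image: "arcsin_s s ` {0..1} = {0..pi_s s / 2}"
proof
  show "arcsin_s s ` {0..1} \<subseteq> {0..pi_s s / 2}"
  proof
    fix z assume "z \<in> arcsin_s s ` {0..1}"
    then obtain y where y: "y \<in> {0..1}" "z = arcsin_s s y" by auto
    have "arcsin_s s 0 \<le> arcsin_s s y" "arcsin_s s y \<le> arcsin_s s 1"
      using y strict_mono_on_leD[OF arcsin_s_strict_mono] by auto
    then show "z \<in> {0..pi_s s / 2}"
      using y by (simp add: arcsin_s_0 arcsin_s_1)
  qed
  show "{0..pi_s s / 2} \<subseteq> arcsin_s s ` {0..1}"
  proof
    fix z assume "z \<in> {0..pi_s s / 2}"
    then obtain y where "0 \<le> y" "y \<le> 1" "arcsin_s s y = z"
      using IVT'[of "arcsin_s s" 0 z 1] continuous_on_arcsin_s by (auto simp: arcsin_s_0 arcsin_s_1)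
    then show "z \<in> arcsin_s s ` {0..1}"
      by auto
  qed
qed

lemma sin_s_mem: "sin_s s z \<in> {0..1}"
  unfolding sin_s_def using arcsin_s_image pi_s_pos strict_mono_on_imp_inj_on[OF arcsin_s_strict_mono]
  by (intro the_inv_into_into) auto

lemma sin_s_powr_le_1: "sin_s s z powr s \<le> 1"
  using sin_s_mem[of z] powr_s_le_self[of "sin_s s z"] by auto

lemma arcsin_s_sin_s:
  assumes "z \<in> {0..pi_s s / 2}"
  shows "arcsin_s s (sin_s s z) = z"
proof -
  have "max 0 (min (pi_s s / 2) z) = z"
    using assms by auto
  then show ?thesis
    using assms arcsin_s_image f_the_inv_into_f[OF strict_mono_on_imp_inj_on[OF arcsin_s_strict_mono]]
    by (simp add: sin_s_def)
qed

lemma sin_s_arcsin_s: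
  assumes "y \<in> {0..1}"
  shows "sin_s s (arcsin_s s y) = y"
proof -
  have "arcsin_s s y \<in> {0..pi_s s / 2}"
    using assms arcsin_s_image by blast
  then have "max 0 (min (pi_s s / 2) (arcsin_s s y)) = arcsin_s s y"
    by auto
  then show ?thesis
    using assms the_inv_into_f_f[OF strict_mono_on_imp_inj_on[OF arcsin_s_strict_mono]]
    by (simp add: sin_s_def)
qed

lemma sin_s_0: "sin_s s 0 = 0"
  using sin_s_arcsin_s[of 0] by (simp add: arcsin_s_0)

lemma sin_s_half_pi_s: "sin_s s (pi_s s / 2) = 1"
  using sin_s_arcsin_s[of 1] by (simp add: arcsin_s_1)

lemma sin_s_bounds:
  assumes "0 < z" "z < pi_s s / 2"
  shows "0 < sin_s s z" "sin_s s z < 1"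
proof -
  have z: "arcsin_s s (sin_s s z) = z"
    using assms by (intro arcsin_s_sin_s) auto
  have "sin_s s z \<noteq> 0"
  proof
    assume "sin_s s z = 0"
    with z show False using assms by (simp add: arcsin_s_0)
  qed
  moreover have "sin_s s z \<noteq> 1"
  proof
    assume "sin_s s z = 1"
    with z show False using assms by (simp add: arcsin_s_1)
  qed
  ultimately show "0 < sin_s s z" "sin_s s z < 1"
    using sin_s_mem[of z] by auto
qed

lemma continuous_on_sin_s: "continuous_on UNIV (sin_s s)"
proof -
  have "continuous_on {0..pi_s s / 2} (the_inv_into {0..1} (arcsin_s s))"
    using continuous_on_inv_into[OF continuous_on_arcsin_s _ strict_mono_on_imp_inj_on[OF arcsin_s_strict_mono]]
    by (simp add: arcsin_s_image)
  moreover have "continuous_on UNIV (\<lambda>z. max 0 (min (pi_s s / 2) z))"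
    by (intro continuous_intros)
  moreover have "(\<lambda>z. max 0 (min (pi_s s / 2) z)) ` UNIV \<subseteq> {0..pi_s s / 2}"
    using pi_s_pos by auto
  ultimately show ?thesis
    unfolding sin_s_def by (rule continuous_on_compose2)
qed

lemma has_real_derivative_sin_s:
  assumes z: "0 < z" "z < pi_s s / 2"
  shows "(sin_s s has_real_derivative cos_s s z) (at z)"
proof -
  have "sin_s s z powr s < 1"
    using sin_s_bounds[OF z] powr_s_le_self[of "sin_s s z"] by simp
  then have nonzero: "1 / (1 - sin_s s z powr s) powr (1/s) \<noteq> 0"
    by simp
  have "(sin_s s has_real_derivative inverse (1 / (1 - sin_s s z powr s) powr (1/s))) (at z)"
  proof (rule DERIV_inverse_function[OF _ nonzero z])
    show "(arcsin_s s has_real_derivative 1 / (1 - sin_s s z powr s) powr (1/s)) (at (sin_s s z))"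
      using sin_s_bounds[OF z] by (rule has_real_derivative_arcsin_s)
    show "arcsin_s s (sin_s s y) = y" if "0 < y" "y < pi_s s / 2" for y
      using that by (intro arcsin_s_sin_s) auto
    show "isCont (sin_s s) z"
      using continuous_on_sin_s by (simp add: continuous_on_eq_continuous_at)
  qed
  then show ?thesis
    by (simp add: cos_s_def)
qed

lemma continuous_on_cos_s: "continuous_on UNIV (cos_s s)"
  unfolding cos_s_def using sin_s_mem sin_s_powr_le_1 s
  by (intro continuous_on_powr' continuous_on_diff continuous_on_const continuous_on_sin_s) auto

lemma cos_s_powr_s: "cos_s s z powr s = 1 - sin_s s z powr s"
  using sin_s_powr_le_1[of z] s by (simp add: cos_s_def powr_powr)

text \<open>The function differentiated here is sin_s * cos_s^(s - 1).\<close>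
lemma has_real_derivative_sin_s_antiderivative:
  assumes z: "0 < z" "z < pi_s s / 2"
  shows "((\<lambda>z. sin_s s z * (1 - sin_s s z powr s) powr ((s - 1) / s))
           has_real_derivative 1 - s * sin_s s z powr s) (at z)"
proof -
  define G where "G = sin_s s z"
  define D where "D = 1 - G powr s"
  define e where "e = (s - 1) / s"
  have G: "0 < G" "G < 1"
    using sin_s_bounds[OF z] by (auto simp: G_def)
  have D: "0 < D"
    using G powr_s_le_self[of G] by (simp add: D_def)
  have C: "cos_s s z = D powr (1/s)"
    by (simp add: cos_s_def D_def G_def)
  have deriv: "((\<lambda>z. sin_s s z * (1 - sin_s s z powr s) powr e) has_real_derivative
      cos_s s z * D powr e + G * (e * D powr (e - 1) * - (s * G powr (s - 1) * cos_s s z))) (at z)"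
    using G D has_real_derivative_sin_s[OF z] unfolding D_def G_def
    by (auto intro!: derivative_eq_intros)
  moreover have cos_part: "cos_s s z * D powr e = D"
  proof -
    have "1 / s + e = 1"
      using s by (simp add: e_def field_simps)
    then show ?thesis
      using D by (simp add: C flip: powr_add)
  qed
  moreover have sin_part: "G * (e * D powr (e - 1) * - (s * G powr (s - 1) * cos_s s z)) = - (s - 1) * G powr s"
  proof -
    have "e - 1 + 1 / s = 0"
      using s by (simp add: e_def field_simps)
    then have "D powr (e - 1) * cos_s s z = 1"
      using D by (simp add: C flip: powr_add)
    moreover have "G * G powr (s - 1) = G powr s"
      using G by (simp add: powr_mult_base)
    moreover have "e * s = s - 1"
      using s by (simp add: e_def)
    moreover have "G * (e * D powr (e - 1) * - (s * G powr (s - 1) * cos_s s z))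
        = - (e * s) * (G * G powr (s - 1)) * (D powr (e - 1) * cos_s s z)"
      by (simp add: algebra_simps)
    ultimately show ?thesis
      by simp
  qed
  ultimately have "((\<lambda>z. sin_s s z * (1 - sin_s s z powr s) powr e) has_real_derivative
      D + - (s - 1) * G powr s) (at z)"
    by (simp only: cos_part sin_part)
  then show ?thesis
    unfolding e_def by (rule DERIV_cong) (simp add: D_def G_def algebra_simps)
qed

lemma sin_s_powr_has_integral:
  "((\<lambda>z. sin_s s z powr s) has_integral pi_s s / (2 * s)) {0..pi_s s / 2}"
proof -
  let ?H = "\<lambda>z. sin_s s z * (1 - sin_s s z powr s) powr ((s - 1) / s)"
  have cont_powr: "continuous_on UNIV (\<lambda>z. sin_s s z powr s)"
    using sin_s_mem s by (intro continuous_on_powr' continuous_on_sin_s continuous_intros) auto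
  have "continuous_on UNIV ?H"
    using sin_s_mem sin_s_powr_le_1 s
    by (intro continuous_on_mult continuous_on_sin_s continuous_on_powr' continuous_on_diff
        continuous_on_const cont_powr) auto
  then have "((\<lambda>z. 1 - s * sin_s s z powr s) has_integral ?H (pi_s s / 2) - ?H 0) {0..pi_s s / 2}"
    using pi_s_pos has_real_derivative_sin_s_antiderivative
    by (intro fundamental_theorem_of_calculus_interior)
       (auto simp: has_real_derivative_iff_has_vector_derivative intro: continuous_on_subset)
  then have zero: "((\<lambda>z. 1 - s * sin_s s z powr s) has_integral 0) {0..pi_s s / 2}"
    by (simp add: sin_s_0 sin_s_half_pi_s)
  obtain I where I: "((\<lambda>z. sin_s s z powr s) has_integral I) {0..pi_s s / 2}"
    using integrable_continuous_real[OF continuous_on_subset[OF cont_powr]] by blast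
  have "((\<lambda>z. 1 - s * sin_s s z powr s) has_integral pi_s s / 2 - s * I) {0..pi_s s / 2}"
    using has_integral_diff[OF has_integral_const_real[of 1] has_integral_mult_right[OF I, of s]] pi_s_pos
    by simp
  then have "pi_s s / 2 - s * I = 0"
    using zero by (rule has_integral_unique)
  then show ?thesis
    using I s by (simp add: field_simps)
qed

end

section \<open>An upper bound for the first eigenvalue of the s-Laplacian\<close>

text \<open>
  sin_s (pi_s (t - a) / (b - a)) up to the midpoint of [a, b], reflected there:
  min (t - a) (b - t) is the distance to the nearer endpoint.
\<close>
definition sin_s_arch :: "real \<Rightarrow> real \<Rightarrow> real \<Rightarrow> real \<Rightarrow> real" where
  "sin_s_arch s a b t = sin_s s (pi_s s / (b - a) * min (t - a) (b - t))"

definition sin_s_arch_deriv :: "real \<Rightarrow> real \<Rightarrow> real \<Rightarrow> real \<Rightarrow> real" where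
  "sin_s_arch_deriv s a b t =
     (if 2 * t \<le> a + b then 1 else -1) * (pi_s s / (b - a)) * cos_s s (pi_s s / (b - a) * min (t - a) (b - t))"

context
  fixes s a b :: real
  assumes s: "1 < s" and ab: "a < b"
begin

lemma sin_s_arch_scale_pos: "0 < pi_s s / (b - a)"
  using pi_s_pos[OF s] ab by simp

lemma continuous_on_sin_s_arch: "continuous_on UNIV (sin_s_arch s a b)"
  unfolding sin_s_arch_def
  by (intro continuous_on_compose2[OF continuous_on_sin_s[OF s]] continuous_intros) auto

lemma has_real_derivative_sin_s_arch:
  assumes t: "a < t" "t < b" "2 * t \<noteq> a + b"
  shows "(sin_s_arch s a b has_real_derivative sin_s_arch_deriv s a b t) (at t)"
proof -
  let ?k = "pi_s s / (b - a)"
  have pos: "0 < min (t - a) (b - t)" and less: "min (t - a) (b - t) < (b - a) / 2"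
    using t by (auto simp: min_def)
  have "0 < ?k * min (t - a) (b - t)"
    using sin_s_arch_scale_pos pos by (rule mult_pos_pos)
  moreover have "?k * min (t - a) (b - t) < ?k * ((b - a) / 2)"
    using less sin_s_arch_scale_pos by (rule mult_strict_left_mono)
  moreover have "?k * ((b - a) / 2) = pi_s s / 2"
    using ab by simp
  ultimately have "0 < ?k * min (t - a) (b - t)" "?k * min (t - a) (b - t) < pi_s s / 2"
    by auto
  from DERIV_chain2[OF has_real_derivative_sin_s[OF s this] DERIV_cmult[OF has_real_derivative_min_diff[OF t(3)]]]
  have "((\<lambda>t. sin_s s (?k * min (t - a) (b - t))) has_real_derivative sin_s_arch_deriv s a b t) (at t)"
    by (rule DERIV_cong) (simp add: sin_s_arch_deriv_def)
  then show ?thesis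
    by (simp add: sin_s_arch_def[abs_def])
qed

lemma sin_s_arch_deriv_has_integral:
  assumes x: "a \<le> x" "x \<le> b"
  shows "(sin_s_arch_deriv s a b has_integral sin_s_arch s a b x) {a..x}"
proof -
  have "(sin_s_arch_deriv s a b has_integral sin_s_arch s a b x - sin_s_arch s a b a) {a..x}"
    using x has_real_derivative_sin_s_arch
    by (intro fundamental_theorem_of_calculus_interior_strong[where S = "{(a + b) / 2}"]
        continuous_on_subset[OF continuous_on_sin_s_arch])
       (auto simp: has_real_derivative_iff_has_vector_derivative)
  then show ?thesis
    using ab by (simp add: sin_s_arch_def sin_s_0[OF s])
qed

lemma sin_s_arch_endpoints: "sin_s_arch s a b a = 0" "sin_s_arch s a b b = 0"
  using ab by (simp_all add: sin_s_arch_def sin_s_0[OF s])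

lemma sin_s_arch_midpoint: "sin_s_arch s a b ((a + b) / 2) = 1"
proof -
  have "(a + b) / 2 - a = (b - a) / 2" "b - (a + b) / 2 = (b - a) / 2"
    by (simp_all add: field_simps)
  then have "pi_s s / (b - a) * min ((a + b) / 2 - a) (b - (a + b) / 2) = pi_s s / 2"
    using ab by simp
  then show ?thesis
    unfolding sin_s_arch_def by (simp only: sin_s_half_pi_s[OF s])
qed

lemma abs_sin_s_arch_deriv:
  "\<bar>sin_s_arch_deriv s a b t\<bar> = pi_s s / (b - a) * cos_s s (pi_s s / (b - a) * min (t - a) (b - t))"
  using pi_s_pos[OF s] ab by (simp add: sin_s_arch_deriv_def abs_mult abs_of_nonneg[OF cos_s_nonneg])

lemma continuous_on_cos_s_tent:
  "continuous_on UNIV (\<lambda>t. cos_s s (pi_s s / (b - a) * min (t - a) (b - t)))"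
proof -
  have "continuous_on UNIV (\<lambda>t. pi_s s / (b - a) * min (t - a) (b - t))"
    by (intro continuous_intros)
  from continuous_on_compose2[OF continuous_on_cos_s[OF s] this] show ?thesis
    by simp
qed

lemma continuous_on_abs_sin_s_arch_deriv_powr:
  assumes r: "0 < r"
  shows "continuous_on UNIV (\<lambda>t. \<bar>sin_s_arch_deriv s a b t\<bar> powr r)"
proof -
  have "continuous_on UNIV (\<lambda>t. pi_s s / (b - a) * cos_s s (pi_s s / (b - a) * min (t - a) (b - t)))"
    by (rule continuous_on_mult[OF continuous_on_const continuous_on_cos_s_tent])
  moreover have "0 \<le> pi_s s / (b - a) * cos_s s (pi_s s / (b - a) * min (t - a) (b - t))" for t
    using sin_s_arch_scale_pos cos_s_nonneg by (intro mult_nonneg_nonneg) auto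
  ultimately show ?thesis
    unfolding abs_sin_s_arch_deriv using r by (intro continuous_on_powr'[OF _ continuous_on_const]) auto
qed

lemma sin_s_arch_deriv_borel: "sin_s_arch_deriv s a b \<in> borel_measurable borel"
proof -
  have "(\<lambda>t. cos_s s (pi_s s / (b - a) * min (t - a) (b - t))) \<in> borel_measurable borel"
    by (rule borel_measurable_continuous_onI[OF continuous_on_cos_s_tent])
  then show ?thesis
    unfolding sin_s_arch_deriv_def[abs_def] by measurable
qed

lemma W10_sin_s_arch:
  assumes r: "0 < r"
  shows "W10 r a b (sin_s_arch s a b) (sin_s_arch_deriv s a b)"
proof -
  have "set_integrable lborel {a..b} (\<lambda>t. \<bar>sin_s_arch_deriv s a b t\<bar> powr r)"
    by (rule borel_integrable_atLeastAtMost'[OF continuous_on_subset[OF continuous_on_abs_sin_s_arch_deriv_powr[OF r]]]) simp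
  moreover have deriv_integrable: "set_integrable lborel {a..b} (sin_s_arch_deriv s a b)"
  proof -
    have "set_integrable lborel {a..b} (\<lambda>t. \<bar>sin_s_arch_deriv s a b t\<bar> powr 1)"
      by (rule borel_integrable_atLeastAtMost'[OF continuous_on_subset[OF continuous_on_abs_sin_s_arch_deriv_powr]]) simp_all
    moreover have "sin_s_arch_deriv s a b \<in> borel_measurable lborel"
      using sin_s_arch_deriv_borel by simp
    ultimately show ?thesis
      using set_integrable_abs_iff'[of "sin_s_arch_deriv s a b" lborel "{a..b}"] by simp
  qed
  moreover have "sin_s_arch s a b x = (LINT t:{a..x}|lborel. sin_s_arch_deriv s a b t)"
    if x: "x \<in> {a..b}" for x
  proof -
    have "set_integrable lborel {a..x} (sin_s_arch_deriv s a b)"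
      by (rule set_integrable_subset[OF deriv_integrable]) (use x in auto)
    then have "(LINT t:{a..x}|lborel. sin_s_arch_deriv s a b t) = integral {a..x} (sin_s_arch_deriv s a b)"
      by (rule set_borel_integral_eq_integral(2))
    also have "\<dots> = sin_s_arch s a b x"
      using sin_s_arch_deriv_has_integral x by (auto intro: integral_unique)
    finally show ?thesis
      by simp
  qed
  ultimately show ?thesis
    unfolding W10_def using sin_s_arch_endpoints by blast
qed

lemma sin_s_arch_powr_has_integral:
  "((\<lambda>t. sin_s_arch s a b t powr s) has_integral (b - a) / s) {a..b}"
proof -
  have "pi_s s / (b - a) * (b - a) / 2 = pi_s s / 2"
    using ab by simp
  then have "((\<lambda>z. sin_s s z powr s) has_integral pi_s s / (2 * s)) {0..pi_s s / (b - a) * (b - a) / 2}"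
    using sin_s_powr_has_integral[OF s] by simp
  from has_integral_comp_tent[OF this sin_s_arch_scale_pos] ab
  have "((\<lambda>t. sin_s_arch s a b t powr s) has_integral 2 * (pi_s s / (2 * s)) / (pi_s s / (b - a))) {a..b}"
    by (simp add: sin_s_arch_def)
  also have "2 * (pi_s s / (2 * s)) / (pi_s s / (b - a)) = (b - a) / s"
    using pi_s_pos[OF s] ab s by (simp add: field_simps)
  finally show ?thesis .
qed

lemma sin_s_arch_powr_integral:
  "(LINT t:{a..b}|lborel. \<bar>sin_s_arch s a b t\<bar> powr s) = (b - a) / s"
proof -
  have nonneg: "\<bar>sin_s_arch s a b t\<bar> = sin_s_arch s a b t" for t
    using sin_s_mem[OF s] by (simp add: sin_s_arch_def)
  have "continuous_on {a..b} (\<lambda>t. sin_s_arch s a b t powr s)"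
    using s sin_s_mem[OF s]
    by (intro continuous_on_powr' continuous_on_subset[OF continuous_on_sin_s_arch] continuous_intros)
       (auto simp: sin_s_arch_def)
  then have "(LINT t:{a..b}|lborel. sin_s_arch s a b t powr s) = integral {a..b} (\<lambda>t. sin_s_arch s a b t powr s)"
    by (intro set_borel_integral_eq_integral(2) borel_integrable_atLeastAtMost')
  then show ?thesis
    using integral_unique[OF sin_s_arch_powr_has_integral] by (simp add: nonneg)
qed

lemma sin_s_arch_deriv_powr_integral:
  "(LINT t:{a..b}|lborel. \<bar>sin_s_arch_deriv s a b t\<bar> powr s)
     = (pi_s s / (b - a)) powr s * ((b - a) - (b - a) / s)"
proof -
  have eq: "\<bar>sin_s_arch_deriv s a b t\<bar> powr s = (pi_s s / (b - a)) powr s * (1 - sin_s_arch s a b t powr s)" for t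
  proof -
    have "\<bar>sin_s_arch_deriv s a b t\<bar> powr s
        = (pi_s s / (b - a)) powr s * cos_s s (pi_s s / (b - a) * min (t - a) (b - t)) powr s"
      unfolding abs_sin_s_arch_deriv by (rule powr_mult)
    then show ?thesis
      by (simp add: cos_s_powr_s[OF s] sin_s_arch_def)
  qed
  have "((\<lambda>t. 1 - sin_s_arch s a b t powr s) has_integral (b - a) - (b - a) / s) {a..b}"
    using has_integral_diff[OF has_integral_const_real[of 1 a b] sin_s_arch_powr_has_integral] ab by simp
  then have "((\<lambda>t. \<bar>sin_s_arch_deriv s a b t\<bar> powr s)
      has_integral (pi_s s / (b - a)) powr s * ((b - a) - (b - a) / s)) {a..b}"
    unfolding eq by (rule has_integral_mult_right)
  moreover have "set_integrable lborel {a..b} (\<lambda>t. \<bar>sin_s_arch_deriv s a b t\<bar> powr s)"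
    using s by (intro borel_integrable_atLeastAtMost' continuous_on_subset[OF continuous_on_abs_sin_s_arch_deriv_powr]) auto
  ultimately show ?thesis
    using set_borel_integral_eq_integral(2) integral_unique by metis
qed

lemma Lambda1_le: "Lambda1 s a b \<le> (s - 1) * (pi_s s / (b - a)) powr s"
proof -
  let ?R = "{(LINT t:{a..b}|lborel. \<bar>g t\<bar> powr s) / (LINT t:{a..b}|lborel. \<bar>u t\<bar> powr s)
             | u g. W10 s a b u g \<and> (\<exists>x\<in>{a..b}. u x \<noteq> 0)}"
  have "\<exists>x\<in>{a..b}. sin_s_arch s a b x \<noteq> 0"
    using sin_s_arch_midpoint ab by (intro bexI[of _ "(a + b) / 2"]) auto
  then have "(pi_s s / (b - a)) powr s * ((b - a) - (b - a) / s) / ((b - a) / s) \<in> ?R"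
    using W10_sin_s_arch[of s] s sin_s_arch_deriv_powr_integral sin_s_arch_powr_integral by force
  moreover have "bdd_below ?R"
    by (rule bdd_belowI[of _ 0]) (auto intro!: divide_nonneg_nonneg set_integral_nonneg)
  ultimately have "Lambda1 s a b \<le> (pi_s s / (b - a)) powr s * ((b - a) - (b - a) / s) / ((b - a) / s)"
    unfolding Lambda1_def by (rule cInf_lower)
  also have "\<dots> = (s - 1) * (pi_s s / (b - a)) powr s"
    using ab s by (simp add: field_simps)
  finally show ?thesis .
qed

end

section \<open>A lower bound for the coupled Rayleigh quotient\<close>

lemma W10D:
  assumes "W10 p a b u g"
  shows "g integrable_on {a..b}" "(\<lambda>t. \<bar>g t\<bar>) integrable_on {a..b}"
    "(\<lambda>t. \<bar>g t\<bar> powr p) integrable_on {a..b}"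
    "(LINT t:{a..b}|lborel. \<bar>g t\<bar> powr p) = integral {a..b} (\<lambda>t. \<bar>g t\<bar> powr p)"
    "\<And>x. x \<in> {a..b} \<Longrightarrow> u x = integral {a..x} g"
    "u b = 0"
proof -
  have g: "set_integrable lborel {a..b} g" and gp: "set_integrable lborel {a..b} (\<lambda>t. \<bar>g t\<bar> powr p)"
    and u: "\<forall>x\<in>{a..b}. u x = (LINT t:{a..x}|lborel. g t)" and "u b = 0"
    using assms unfolding W10_def by auto
  show "g integrable_on {a..b}"
    by (rule set_borel_integral_eq_integral(1)[OF g])
  show "(\<lambda>t. \<bar>g t\<bar>) integrable_on {a..b}"
    by (rule set_borel_integral_eq_integral(1)[OF set_integrable_abs[OF g]])
  show "(\<lambda>t. \<bar>g t\<bar> powr p) integrable_on {a..b}"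
    by (rule set_borel_integral_eq_integral(1)[OF gp])
  show "(LINT t:{a..b}|lborel. \<bar>g t\<bar> powr p) = integral {a..b} (\<lambda>t. \<bar>g t\<bar> powr p)"
    by (rule set_borel_integral_eq_integral(2)[OF gp])
  show "u b = 0"
    by fact
  fix x assume x: "x \<in> {a..b}"
  have "set_integrable lborel {a..x} g"
    by (rule set_integrable_subset[OF g]) (use x in auto)
  then show "u x = integral {a..x} g"
    using u x set_borel_integral_eq_integral(2) by metis
qed

text \<open>u x is both the integral of g over [a, x] and minus its integral over [x, b].\<close>
lemma W10_abs_le_half_integral:
  assumes w: "W10 p a b u g" and x: "x \<in> {a..b}"
  shows "2 * \<bar>u x\<bar> \<le> integral {a..b} (\<lambda>t. \<bar>g t\<bar>)"
proof -
  note W = W10D[OF w]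
  have ab: "a \<le> b"
    using x by simp
  have split_g: "integral {a..x} g + integral {x..b} g = integral {a..b} g"
    using Henstock_Kurzweil_Integration.integral_combine[OF _ _ W(1)] x by auto
  have split_abs: "integral {a..x} (\<lambda>t. \<bar>g t\<bar>) + integral {x..b} (\<lambda>t. \<bar>g t\<bar>) = integral {a..b} (\<lambda>t. \<bar>g t\<bar>)"
    using Henstock_Kurzweil_Integration.integral_combine[OF _ _ W(2)] x by auto
  have "integral {a..b} g = 0"
    using W(5)[of b] W(6) ab by simp
  moreover have "\<bar>integral {a..x} g\<bar> \<le> integral {a..x} (\<lambda>t. \<bar>g t\<bar>)"
    using integral_norm_bound_integral[of g "{a..x}" "\<lambda>t. \<bar>g t\<bar>"] integrable_on_subinterval[OF W(1)]
      integrable_on_subinterval[OF W(2)] x by simp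
  moreover have "\<bar>integral {x..b} g\<bar> \<le> integral {x..b} (\<lambda>t. \<bar>g t\<bar>)"
    using integral_norm_bound_integral[of g "{x..b}" "\<lambda>t. \<bar>g t\<bar>"] integrable_on_subinterval[OF W(1)]
      integrable_on_subinterval[OF W(2)] x by simp
  ultimately show ?thesis
    using W(5)[OF x] split_g split_abs by linarith
qed

lemma W10_abs_le_Holder_bound:
  assumes p: "1 < p" and ab: "a < b" and w: "W10 p a b u g" and x: "x \<in> {a..b}"
  shows "\<bar>u x\<bar> \<le> (LINT t:{a..b}|lborel. \<bar>g t\<bar> powr p) powr (1/p) * (b - a) powr (1 - 1/p) / 2"
  using W10_abs_le_half_integral[OF w x] Holder_integral_abs[OF p ab W10D(2,3)[OF w]] W10D(4)[OF w]
  by simp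

lemma integral_powr_product_le:
  fixes p q \<alpha> \<beta> a b :: real
  assumes p: "1 < p" and q: "1 < q" and al: "0 < \<alpha>" and be: "0 < \<beta>"
    and pq: "\<alpha> / p + \<beta> / q = 1" and ab: "a < b"
    and wu: "W10 p a b u g" and wv: "W10 q a b v h"
    and uv: "set_integrable lborel {a..b} (\<lambda>t. \<bar>u t\<bar> powr \<alpha> * \<bar>v t\<bar> powr \<beta>)"
  shows "(LINT t:{a..b}|lborel. \<bar>u t\<bar> powr \<alpha> * \<bar>v t\<bar> powr \<beta>)
           \<le> ((b - a) / 2) powr (\<alpha> + \<beta>)
              * (LINT t:{a..b}|lborel. \<bar>g t\<bar> powr p) powr (\<alpha> / p)
              * (LINT t:{a..b}|lborel. \<bar>h t\<bar> powr q) powr (\<beta> / q)"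
proof -
  define L where "L = b - a"
  define A where "A = (LINT t:{a..b}|lborel. \<bar>g t\<bar> powr p)"
  define B where "B = (LINT t:{a..b}|lborel. \<bar>h t\<bar> powr q)"
  define U where "U = A powr (1/p) * L powr (1 - 1/p) / 2"
  define V where "V = B powr (1/q) * L powr (1 - 1/q) / 2"
  have L: "0 < L"
    using ab by (simp add: L_def)
  have A: "0 \<le> A" and B: "0 \<le> B"
    unfolding A_def B_def by (auto intro: set_integral_nonneg)
  have "\<bar>u t\<bar> powr \<alpha> * \<bar>v t\<bar> powr \<beta> \<le> U powr \<alpha> * V powr \<beta>" if t: "t \<in> {a..b}" for t
    using W10_abs_le_Holder_bound[OF p ab wu t] W10_abs_le_Holder_bound[OF q ab wv t] al be
    by (intro mult_mono powr_mono2) (auto simp: U_def V_def A_def B_def L_def)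
  then have "integral {a..b} (\<lambda>t. \<bar>u t\<bar> powr \<alpha> * \<bar>v t\<bar> powr \<beta>) \<le> integral {a..b} (\<lambda>t. U powr \<alpha> * V powr \<beta>)"
    by (intro integral_le[OF set_borel_integral_eq_integral(1)[OF uv] integrable_const_ivl]) auto
  also have "\<dots> = U powr \<alpha> * V powr \<beta> * L"
    using ab by (simp add: L_def)
  also have "\<dots> = (L / 2) powr (\<alpha> + \<beta>) * A powr (\<alpha> / p) * B powr (\<beta> / q)"
  proof -
    have eqU: "U powr \<alpha> = A powr (\<alpha> / p) * L powr (\<alpha> * (1 - 1/p)) / 2 powr \<alpha>"
      using A L by (simp add: U_def powr_divide powr_mult powr_powr mult.commute)
    have eqV: "V powr \<beta> = B powr (\<beta> / q) * L powr (\<beta> * (1 - 1/q)) / 2 powr \<beta>"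
      using B L by (simp add: V_def powr_divide powr_mult powr_powr mult.commute)
    have "L powr (\<alpha> * (1 - 1/p)) * L powr (\<beta> * (1 - 1/q)) * L powr 1
        = L powr (\<alpha> * (1 - 1/p) + \<beta> * (1 - 1/q) + 1)"
      by (simp only: powr_add)
    also have "\<alpha> * (1 - 1/p) + \<beta> * (1 - 1/q) + 1 = \<alpha> + \<beta>"
      using pq by (simp add: algebra_simps)
    finally have "L powr (\<alpha> * (1 - 1/p)) * L powr (\<beta> * (1 - 1/q)) * L = L powr (\<alpha> + \<beta>)"
      using L by simp
    moreover have "(L / 2) powr (\<alpha> + \<beta>) = L powr (\<alpha> + \<beta>) / (2 powr \<alpha> * 2 powr \<beta>)"
      using L by (simp add: powr_divide powr_add)
    ultimately show ?thesis
      unfolding eqU eqV by (simp add: field_simps)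
  qed
  finally show ?thesis
    using set_borel_integral_eq_integral(2)[OF uv] by (simp add: L_def A_def B_def)
qed

lemma Rayleigh_quotient_ge:
  fixes p q \<alpha> \<beta> a b :: real
  assumes p: "1 < p" and q: "1 < q" and al: "0 < \<alpha>" and be: "0 < \<beta>"
    and pq: "\<alpha> / p + \<beta> / q = 1" and ab: "a < b"
    and wu: "W10 p a b u g" and wv: "W10 q a b v h"
    and D: "0 < (LINT t:{a..b}|lborel. \<bar>u t\<bar> powr \<alpha> * \<bar>v t\<bar> powr \<beta>)"
  shows "inverse (\<alpha> powr (\<alpha> / p) * \<beta> powr (\<beta> / q)) * (2 / (b - a)) powr (\<alpha> + \<beta>)
    \<le> ((1/p) * (LINT t:{a..b}|lborel. \<bar>g t\<bar> powr p) + (1/q) * (LINT t:{a..b}|lborel. \<bar>h t\<bar> powr q))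
        / (LINT t:{a..b}|lborel. \<bar>u t\<bar> powr \<alpha> * \<bar>v t\<bar> powr \<beta>)"
proof -
  define A where "A = (LINT t:{a..b}|lborel. \<bar>g t\<bar> powr p)"
  define B where "B = (LINT t:{a..b}|lborel. \<bar>h t\<bar> powr q)"
  define D where "D = (LINT t:{a..b}|lborel. \<bar>u t\<bar> powr \<alpha> * \<bar>v t\<bar> powr \<beta>)"
  define c where "c = \<alpha> powr (\<alpha> / p) * \<beta> powr (\<beta> / q)"
  define K where "K = inverse c * (2 / (b - a)) powr (\<alpha> + \<beta>)"
  have c: "0 < c"
    using al be by (simp add: c_def)
  have K: "0 \<le> K"
    using c by (simp add: K_def)
  have A: "0 \<le> A" and B: "0 \<le> B"
    unfolding A_def B_def by (auto intro: set_integral_nonneg)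
  text \<open>A non-integrable function has Lebesgue integral 0.\<close>
  have "set_integrable lborel {a..b} (\<lambda>t. \<bar>u t\<bar> powr \<alpha> * \<bar>v t\<bar> powr \<beta>)"
    using D not_integrable_integral_eq unfolding set_lebesgue_integral_def set_integrable_def
    by (metis less_irrefl)
  from integral_powr_product_le[OF p q al be pq ab wu wv this]
  have "D \<le> ((b - a) / 2) powr (\<alpha> + \<beta>) * (A powr (\<alpha> / p) * B powr (\<beta> / q))"
    by (simp add: A_def B_def D_def mult.assoc)
  also have "\<dots> \<le> ((b - a) / 2) powr (\<alpha> + \<beta>) * (c * ((1/p) * A + (1/q) * B))"
  proof (rule mult_left_mono)
    show "A powr (\<alpha> / p) * B powr (\<beta> / q) \<le> c * ((1/p) * A + (1/q) * B)"
      using Young_weighted[OF al be _ _ pq A B] p q by (simp add: c_def)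
  qed simp
  finally have "K * D \<le> K * (((b - a) / 2) powr (\<alpha> + \<beta>) * (c * ((1/p) * A + (1/q) * B)))"
    using K by (rule mult_left_mono)
  also have "\<dots> = (1/p) * A + (1/q) * B"
  proof -
    have inverse: "2 / (b - a) * ((b - a) / 2) = 1"
      using ab by simp
    have "(2 / (b - a)) powr (\<alpha> + \<beta>) * ((b - a) / 2) powr (\<alpha> + \<beta>) = 1"
      unfolding powr_mult[symmetric] inverse by simp
    then show ?thesis
      using c by (simp add: K_def field_simps)
  qed
  finally show ?thesis
    using D by (simp add: pos_le_divide_eq A_def B_def D_def K_def c_def)
qed

lemma lambda1_ge:
  fixes p q \<alpha> \<beta> a b :: real
  assumes p: "1 < p" and q: "1 < q" and al: "0 < \<alpha>" and be: "0 < \<beta>"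
    and pq: "\<alpha> / p + \<beta> / q = 1" and ab: "a < b"
  shows "inverse (\<alpha> powr (\<alpha> / p) * \<beta> powr (\<beta> / q)) * (2 / (b - a)) powr (\<alpha> + \<beta>)
           \<le> lambda1 p q \<alpha> \<beta> a b"
  unfolding lambda1_def
proof (rule cInf_greatest)
  let ?s = "\<alpha> + \<beta>"
  have "\<alpha> / p < \<alpha>" "\<beta> / q < \<beta>"
    using al be p q by (simp_all add: divide_less_eq)
  then have s: "1 < ?s"
    using pq by simp
  have "(LINT t:{a..b}|lborel. \<bar>sin_s_arch ?s a b t\<bar> powr \<alpha> * \<bar>sin_s_arch ?s a b t\<bar> powr \<beta>) = (b - a) / ?s"
    using sin_s_arch_powr_integral[OF s ab] by (simp add: powr_add)
  then have "0 < (LINT t:{a..b}|lborel. \<bar>sin_s_arch ?s a b t\<bar> powr \<alpha> * \<bar>sin_s_arch ?s a b t\<bar> powr \<beta>)"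
    using s ab by simp
  moreover have "W10 p a b (sin_s_arch ?s a b) (sin_s_arch_deriv ?s a b)"
    and "W10 q a b (sin_s_arch ?s a b) (sin_s_arch_deriv ?s a b)"
    using W10_sin_s_arch[OF s ab] p q by auto
  ultimately show "{((1/p) * (LINT t:{a..b}|lborel. \<bar>g t\<bar> powr p) + (1/q) * (LINT t:{a..b}|lborel. \<bar>h t\<bar> powr q))
        / (LINT t:{a..b}|lborel. \<bar>u t\<bar> powr \<alpha> * \<bar>v t\<bar> powr \<beta>)
      | u g v h. W10 p a b u g \<and> W10 q a b v h \<and>
                 (LINT t:{a..b}|lborel. \<bar>u t\<bar> powr \<alpha> * \<bar>v t\<bar> powr \<beta>) > 0} \<noteq> {}"
    by blast
qed (use Rayleigh_quotient_ge[OF p q al be pq ab] in blast)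

theorem theorem1p2:
  fixes p q \<alpha> \<beta> a b :: real
  assumes "1 < p" and "1 < q" and "\<alpha> > 0" and "\<beta> > 0"
    and "\<alpha> / p + \<beta> / q = 1" and "a < b"
  shows "inverse (\<alpha> powr (\<alpha> / p) * \<beta> powr (\<beta> / q)) * (2 / pi_s (\<alpha> + \<beta>)) powr (\<alpha> + \<beta>)
           * (Lambda1 (\<alpha> + \<beta>) a b / (\<alpha> + \<beta> - 1)) \<le> lambda1 p q \<alpha> \<beta> a b"
proof -
  define s where "s = \<alpha> + \<beta>"
  define c where "c = inverse (\<alpha> powr (\<alpha> / p) * \<beta> powr (\<beta> / q))"
  have "\<alpha> / p < \<alpha>" "\<beta> / q < \<beta>"
    using assms by (simp_all add: divide_less_eq)
  then have s: "1 < s"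
    using assms by (simp add: s_def)
  have "Lambda1 s a b / (s - 1) \<le> (pi_s s / (b - a)) powr s"
    using Lambda1_le[OF s \<open>a < b\<close>] s by (simp add: pos_divide_le_eq mult.commute)
  moreover have "0 \<le> c * (2 / pi_s s) powr s"
    using assms by (simp add: c_def)
  ultimately have "c * (2 / pi_s s) powr s * (Lambda1 s a b / (s - 1))
      \<le> c * (2 / pi_s s) powr s * (pi_s s / (b - a)) powr s"
    by (rule mult_left_mono)
  also have "\<dots> = c * ((2 / pi_s s) powr s * (pi_s s / (b - a)) powr s)"
    by (simp only: mult.assoc)
  also have "(2 / pi_s s) * (pi_s s / (b - a)) = 2 / (b - a)"
    using pi_s_pos[OF s] by simp
  then have "(2 / pi_s s) powr s * (pi_s s / (b - a)) powr s = (2 / (b - a)) powr s"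
    by (simp only: flip: powr_mult)
  also have "c * (2 / (b - a)) powr s \<le> lambda1 p q \<alpha> \<beta> a b"
    using lambda1_ge[OF assms] unfolding c_def s_def .
  finally show ?thesis
    unfolding c_def s_def .
qed

end
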